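(* Let $D$ be an integral domain with quotient field $K$, $\star$ a semistar operation on $D$, and let $\{(T_\lambda,\ast_\lambda):\lambda\in\Lambda\}$ be a direct family (as defined in the context) with $T=\bigcup_\lambda T_\lambda$. For $E\in\overline{\mathbf F}(T)$ set $E^{\ast^\Lambda}:=\bigcup_{\lambda\in\Lambda}E^{(\ast_\lambda)_f}$. Then: (1) $\ast^\Lambda$ is a semistar operation of finite type on $T$; (2) if $T_\lambda$ is $(\star,\ast_\lambda)$-linked to $D$ for every $\lambda\in\Lambda$, then $T$ is $(\star,\ast^\Lambda)$-linked to $D$; (3) if $T_\lambda$ is $(\star,t_{T_\lambda})$-linked to $D$ for every $\lambda\in\Lambda$, then $T$ is $(\star,t_T)$-linked to $D$.
   Context: Let $D$ be an integral domain with quotient field $K$. $\overline{\mathbf F}(D)$ denotes the set of all nonzero $D$-submodules of $K$ and $\mathbf f(D)$ the set of nonzero finitely generated $D$-submodules of $K$. A semistar operation on $D$ is a map $\star:\overline{\mathbf F}(D)\to\overline{\mathbf F}(D)$, $E\mapsto E^\star$, such that for all $0\ne x\in K$ and $E,F\in\overline{\mathbf F}(D)$: (1) $(xE)^\star=xE^\star$; (2) $E\subseteq F\Rightarrow E^\star\subseteq F^\star$; (3) $E\subseteq E^\star$ and $(E^\star)^\star=E^\star$. $\star_f$ is defined by $E^{\star_f}=\bigcup\{F^\star:F\in\mathbf f(D),F\subseteq E\}$; $\star$ is of finite type if $\star=\star_f$. An overring of $D$ is a ring $T$ with $D\subseteq T\subseteq K$; semistar operations on $T$ are defined likewise. For an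 overring $T$, $v_T$ is the semistar operation $E\mapsto (T:_K(T:_KE))$ on $T$ and $t_T:=(v_T)_f$. If $\star'$ is a semistar operation on an overring $T$, $T$ is $(\star,\star')$-linked to $D$ if for every nonzero finitely generated ideal $F\subseteq D$ with $F^\star=D^\star$ one has $(FT)^{\star'}=T^{\star'}$. A direct family: $\{T_\lambda:\lambda\in\Lambda\}$ is a family of overrings of $D$, directed under inclusion (for any $\alpha,\beta$ there is $\gamma$ with $T_\alpha,T_\beta\subseteq T_\gamma$), $\Lambda$ preordered by $\lambda'\le\lambda''$ iff $T_{\lambda'}\subseteq T_{\lambda''}$, $T=\bigcup_\lambda T_\lambda$, and $\ast_\lambda$ is a semistar operation on $T_\lambda$ for each $\lambda$ such that whenever $T_{\lambda_1}\subseteq T_{\lambda_2}$ and $H\in\mathbf f(T_{\lambda_1})$, one has $H^{\ast_{\lambda_1}}\subseteq (HT_{\lambda_2})^{\ast_{\lambda_2}}$. *)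

theory Defs
  imports Main
begin

text \<open>Ambient setting: the quotient field K of D is the whole field type 'a.
  Sets of elements of 'a stand for subsets of K.\<close>

definition subring :: "'a::field set \<Rightarrow> bool" where
  "subring R \<longleftrightarrow> 0 \<in> R \<and> 1 \<in> R \<and> (\<forall>x\<in>R. \<forall>y\<in>R. x + y \<in> R \<and> x - y \<in> R \<and> x * y \<in> R)"

definition domain_with_qf :: "'a::field set \<Rightarrow> bool" where
  "domain_with_qf D \<longleftrightarrow> subring D \<and> (\<forall>x. \<exists>a\<in>D. \<exists>b\<in>D. b \<noteq> 0 \<and> x = a / b)"

definition overring :: "'a::field set \<Rightarrow> 'a set \<Rightarrow> bool" where
  "overring D T \<longleftrightarrow> subring T \<and> D \<subseteq> T"

definition submod :: "'a::field set \<Rightarrow> 'a set \<Rightarrow> bool" where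
  "submod R E \<longleftrightarrow> 0 \<in> E \<and> (\<forall>x\<in>E. \<forall>y\<in>E. x + y \<in> E) \<and> (\<forall>r\<in>R. \<forall>x\<in>E. r * x \<in> E)"

definition Fbar :: "'a::field set \<Rightarrow> 'a set set" where
  "Fbar R = {E. submod R E \<and> E \<noteq> {0}}"

definition rspan :: "'a::field set \<Rightarrow> 'a set \<Rightarrow> 'a set" where
  "rspan R G = {\<Sum>g\<in>G. c g * g | c. \<forall>g\<in>G. c g \<in> R}"

text \<open>R-submodule generated by an arbitrary set S (used for FT, HT).\<close>
definition gen_mod :: "'a::field set \<Rightarrow> 'a set \<Rightarrow> 'a set" where
  "gen_mod R S = \<Union>{rspan R G | G. finite G \<and> G \<subseteq> S}"

definition fg :: "'a::field set \<Rightarrow> 'a set \<Rightarrow> bool" where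
  "fg R E \<longleftrightarrow> (\<exists>G. finite G \<and> E = rspan R G) \<and> E \<noteq> {0}"

definition smult_set :: "'a::field \<Rightarrow> 'a set \<Rightarrow> 'a set" where
  "smult_set x E = (\<lambda>e. x * e) ` E"

definition semistar_op :: "'a::field set \<Rightarrow> ('a set \<Rightarrow> 'a set) \<Rightarrow> bool" where
  "semistar_op R st \<longleftrightarrow>
     (\<forall>E\<in>Fbar R. st E \<in> Fbar R) \<and>
     (\<forall>x. \<forall>E\<in>Fbar R. x \<noteq> 0 \<longrightarrow> st (smult_set x E) = smult_set x (st E)) \<and>
     (\<forall>E\<in>Fbar R. \<forall>F\<in>Fbar R. E \<subseteq> F \<longrightarrow> st E \<subseteq> st F) \<and>
     (\<forall>E\<in>Fbar R. E \<subseteq> st E \<and> st (st E) = st E)"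

definition star_f :: "'a::field set \<Rightarrow> ('a set \<Rightarrow> 'a set) \<Rightarrow> 'a set \<Rightarrow> 'a set" where
  "star_f R st E = \<Union>{st F | F. fg R F \<and> F \<subseteq> E}"

definition finite_type :: "'a::field set \<Rightarrow> ('a set \<Rightarrow> 'a set) \<Rightarrow> bool" where
  "finite_type R st \<longleftrightarrow> (\<forall>E\<in>Fbar R. st E = star_f R st E)"

definition colon :: "'a::field set \<Rightarrow> 'a set \<Rightarrow> 'a set" where
  "colon A B = {x. \<forall>y\<in>B. x * y \<in> A}"

definition v_op :: "'a::field set \<Rightarrow> 'a set \<Rightarrow> 'a set" where
  "v_op T E = colon T (colon T E)"

definition t_op :: "'a::field set \<Rightarrow> 'a set \<Rightarrow> 'a set" where
  "t_op T = star_f T (v_op T)"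

definition linked :: "'a::field set \<Rightarrow> ('a set \<Rightarrow> 'a set) \<Rightarrow> 'a set \<Rightarrow> ('a set \<Rightarrow> 'a set) \<Rightarrow> bool" where
  "linked D st T st' \<longleftrightarrow>
     (\<forall>F. fg D F \<and> F \<subseteq> D \<and> st F = st D \<longrightarrow> st' (gen_mod T F) = st' T)"

definition direct_family ::
  "'a::field set \<Rightarrow> 'i set \<Rightarrow> ('i \<Rightarrow> 'a set) \<Rightarrow> ('i \<Rightarrow> 'a set \<Rightarrow> 'a set) \<Rightarrow> bool" where
  "direct_family D \<Lambda> Tf ops \<longleftrightarrow>
     \<Lambda> \<noteq> {} \<and>
     (\<forall>i\<in>\<Lambda>. overring D (Tf i) \<and> semistar_op (Tf i) (ops i)) \<and>
     (\<forall>a\<in>\<Lambda>. \<forall>b\<in>\<Lambda>. \<exists>c\<in>\<Lambda>. Tf a \<subseteq> Tf c \<and> Tf b \<subseteq> Tf c) \<and>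
     (\<forall>a1\<in>\<Lambda>. \<forall>a2\<in>\<Lambda>. Tf a1 \<subseteq> Tf a2 \<longrightarrow>
        (\<forall>H. fg (Tf a1) H \<longrightarrow> ops a1 H \<subseteq> ops a2 (gen_mod (Tf a2) H)))"

end

theory Submission
  imports Defs
begin

(*
  Directedness makes everything finite: a finite subset of T = \<Union> T\<^sub>\<lambda>, and hence a
  finitely generated T\<^sub>\<lambda>-module inside T, already lies in a single T\<^sub>c, and by the
  compatibility condition the sets E^(\<ast>\<^sub>\<lambda>)\<^sub>f increase with \<lambda>. So \<ast>^\<Lambda> is a directed
  union of the finite-type operations (\<ast>\<^sub>\<lambda>)\<^sub>f, and every semistar axiom, which involves
  only finitely many elements at a time, is inherited from a single (\<ast>\<^sub>c)\<^sub>f.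

  For linkedness, an element of T^(\<ast>^\<Lambda>) comes from some H^(\<ast>\<^sub>\<lambda>) with H inside some T\<^sub>c,
  so it lies in T\<^sub>c^(\<ast>\<^sub>c) = (F T\<^sub>c)^(\<ast>\<^sub>c), which is contained in (F T)^(\<ast>^\<Lambda>).
  For t-linkedness, 1 \<in> (F T\<^sub>c)^t \<subseteq> (F T\<^sub>c)^v says (T\<^sub>c : F T\<^sub>c) \<subseteq> T\<^sub>c. If y F \<subseteq> T, the
  products of y with the finitely many generators of F lie in some T\<^sub>c, so y \<in> T\<^sub>c.
  Hence (T : F T) \<subseteq> T, i.e. (F T)^v = T, and (F T)^t = T since F T is finitely generated.
*)

section \<open>Submodules and finite generation\<close>

lemma subringD:
  assumes "subring R"
  shows "0 \<in> R" "1 \<in> R"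
    "x \<in> R \<Longrightarrow> y \<in> R \<Longrightarrow> x + y \<in> R" "x \<in> R \<Longrightarrow> y \<in> R \<Longrightarrow> x - y \<in> R"
    "x \<in> R \<Longrightarrow> y \<in> R \<Longrightarrow> x * y \<in> R"
  using assms unfolding subring_def by auto

lemma submod_subring_mono: "submod R2 E \<Longrightarrow> R1 \<subseteq> R2 \<Longrightarrow> submod R1 E"
  unfolding submod_def by blast

lemma submod_ring: "subring R \<Longrightarrow> submod R R"
  unfolding subring_def submod_def by blast

lemma Fbar_nonzero: "E \<in> Fbar R \<Longrightarrow> \<exists>x\<in>E. x \<noteq> 0"
  unfolding Fbar_def submod_def by blast

lemma Fbar_ring: "subring R \<Longrightarrow> R \<in> Fbar R"
  unfolding Fbar_def using submod_ring subringD(2) by force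

lemma rspanI: "y = (\<Sum>g\<in>G. c g * g) \<Longrightarrow> \<forall>g\<in>G. c g \<in> R \<Longrightarrow> y \<in> rspan R G"
  unfolding rspan_def by blast

lemma rspan_submod:
  assumes R: "subring R"
  shows "submod R (rspan R G)"
  unfolding submod_def
proof (intro conjI ballI)
  show "0 \<in> rspan R G"
    by (rule rspanI[where c = "\<lambda>_. 0"]) (simp_all add: subringD(1)[OF R])
next
  fix x y assume "x \<in> rspan R G" "y \<in> rspan R G"
  then obtain a b where "x = (\<Sum>g\<in>G. a g * g)" "\<forall>g\<in>G. a g \<in> R"
    and "y = (\<Sum>g\<in>G. b g * g)" "\<forall>g\<in>G. b g \<in> R"
    unfolding rspan_def by blast
  then show "x + y \<in> rspan R G"
    by (intro rspanI[where c = "\<lambda>g. a g + b g"])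
      (simp_all add: sum.distrib distrib_right subringD(3)[OF R])
next
  fix r x assume "r \<in> R" "x \<in> rspan R G"
  then obtain a where "x = (\<Sum>g\<in>G. a g * g)" "\<forall>g\<in>G. a g \<in> R"
    unfolding rspan_def by blast
  with \<open>r \<in> R\<close> show "r * x \<in> rspan R G"
    by (intro rspanI[where c = "\<lambda>g. r * a g"])
      (simp_all add: sum_distrib_left mult.assoc subringD(5)[OF R])
qed

lemma rspan_least:
  assumes E: "submod R E" and "finite G" "G \<subseteq> E"
  shows "rspan R G \<subseteq> E"
proof -
  have "(\<Sum>g\<in>G. c g * g) \<in> E" if "\<forall>g\<in>G. c g \<in> R" for c
    using \<open>finite G\<close> \<open>G \<subseteq> E\<close> that
  proof (induction G rule: finite_induct)
    case empty
    then show ?case using E unfolding submod_def by simp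
  next
    case (insert a G)
    then have "c a * a \<in> E" "(\<Sum>g\<in>G. c g * g) \<in> E"
      using E unfolding submod_def by auto
    then show ?case using insert.hyps E unfolding submod_def by simp
  qed
  then show ?thesis unfolding rspan_def by blast
qed

lemma rspan_superset:
  assumes R: "subring R" and "finite G"
  shows "G \<subseteq> rspan R G"
proof
  fix x assume "x \<in> G"
  have "(\<Sum>g\<in>G. (if g = x then 1 else 0) * g) = (\<Sum>g\<in>G. if g = x then g else 0)"
    by (rule sum.cong) auto
  also have "\<dots> = x" using \<open>x \<in> G\<close> \<open>finite G\<close> by (simp add: sum.delta')
  finally have "(\<Sum>g\<in>G. (if g = x then 1 else 0) * g) = x" .
  then show "x \<in> rspan R G"
    by (intro rspanI[where c = "\<lambda>g. if g = x then 1 else 0"]) (auto simp: subringD[OF R])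
qed

lemma rspan_ring_mono: "R1 \<subseteq> R2 \<Longrightarrow> rspan R1 G \<subseteq> rspan R2 G"
  unfolding rspan_def by blast

lemma gen_mod_least: "submod R E \<Longrightarrow> S \<subseteq> E \<Longrightarrow> gen_mod R S \<subseteq> E"
  unfolding gen_mod_def using rspan_least[of R E] by (auto 0 0 simp: subset_iff)

lemma gen_mod_superset:
  assumes "subring R"
  shows "S \<subseteq> gen_mod R S"
proof
  fix x assume "x \<in> S"
  then have "x \<in> rspan R {x}" "finite {x}" "{x} \<subseteq> S"
    using rspan_superset[OF assms, of "{x}"] by auto
  then show "x \<in> gen_mod R S" unfolding gen_mod_def by blast
qed

lemma gen_mod_ring_mono: "R1 \<subseteq> R2 \<Longrightarrow> gen_mod R1 S \<subseteq> gen_mod R2 S"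
  unfolding gen_mod_def using rspan_ring_mono[of R1 R2] by fast

lemma gen_mod_eq_rspan:
  assumes R: "subring R" and "finite G" "G \<subseteq> S" "S \<subseteq> rspan R G"
  shows "gen_mod R S = rspan R G"
proof
  show "gen_mod R S \<subseteq> rspan R G"
    using gen_mod_least[OF rspan_submod[OF R]] \<open>S \<subseteq> rspan R G\<close> .
  show "rspan R G \<subseteq> gen_mod R S"
    unfolding gen_mod_def using \<open>finite G\<close> \<open>G \<subseteq> S\<close> by blast
qed

lemma fg_gen_mod:
  assumes R: "subring R" and "finite G" "G \<subseteq> S" "S \<subseteq> rspan R G" "x \<in> S" "x \<noteq> 0"
  shows "fg R (gen_mod R S)"
proof -
  have eq: "gen_mod R S = rspan R G" by (rule gen_mod_eq_rspan[OF assms(1-4)])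
  have "x \<in> gen_mod R S" using gen_mod_superset[OF R] \<open>x \<in> S\<close> by blast
  then have "rspan R G \<noteq> {0}" using eq \<open>x \<noteq> 0\<close> by auto
  then show ?thesis unfolding fg_def eq using \<open>finite G\<close> by auto
qed

lemma fg_Fbar: "subring R \<Longrightarrow> fg R F \<Longrightarrow> F \<in> Fbar R"
  unfolding fg_def Fbar_def using rspan_submod by blast

lemma fg_extend_scalars:
  assumes "subring R1" "subring R2" "R1 \<subseteq> R2" "fg R1 F"
  shows "fg R2 (gen_mod R2 F)"
proof -
  obtain G where G: "finite G" "F = rspan R1 G" using \<open>fg R1 F\<close> unfolding fg_def by blast
  obtain x where "x \<in> F" "x \<noteq> 0" using Fbar_nonzero[OF fg_Fbar] assms(1,4) by blast
  moreover have "G \<subseteq> F" "F \<subseteq> rspan R2 G"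
    using G rspan_superset[OF assms(1)] rspan_ring_mono[OF assms(3)] by auto
  ultimately show ?thesis by (rule fg_gen_mod[OF assms(2) G(1), rotated 2])
qed

lemma fg_gen_mod_Un:
  assumes R: "subring R" and "fg R F1" "fg R F2"
  shows "fg R (gen_mod R (F1 \<union> F2))"
proof -
  obtain G1 G2 where G: "finite G1" "F1 = rspan R G1" "finite G2" "F2 = rspan R G2"
    using assms(2,3) unfolding fg_def by blast
  have "G1 \<union> G2 \<subseteq> rspan R (G1 \<union> G2)" using rspan_superset[OF R, of "G1 \<union> G2"] G by simp
  then have "F1 \<union> F2 \<subseteq> rspan R (G1 \<union> G2)"
    using rspan_least[OF rspan_submod[OF R]] G by (metis Un_subset_iff finite_UnI)
  moreover have "G1 \<union> G2 \<subseteq> F1 \<union> F2" using rspan_superset[OF R] G by blast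
  moreover obtain x where "x \<in> F1" "x \<noteq> 0" using Fbar_nonzero[OF fg_Fbar[OF R assms(2)]] by blast
  ultimately show ?thesis
    using fg_gen_mod[OF R finite_UnI[OF G(1,3)] _ _ UnI1[OF \<open>x \<in> F1\<close>] \<open>x \<noteq> 0\<close>] by blast
qed

lemma Fbar_element_in_fg:
  assumes R: "subring R" and "E \<in> Fbar R" "e \<in> E"
  shows "\<exists>F. fg R F \<and> F \<subseteq> E \<and> e \<in> F"
proof -
  obtain e0 where "e0 \<in> E" "e0 \<noteq> 0" using Fbar_nonzero[OF \<open>E \<in> Fbar R\<close>] by blast
  have span: "{e, e0} \<subseteq> rspan R {e, e0}" using rspan_superset[OF R, of "{e, e0}"] by simp
  then have "fg R (rspan R {e, e0})"
    unfolding fg_def using \<open>e0 \<noteq> 0\<close> by (intro conjI exI[of _ "{e, e0}"]) auto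
  moreover have "rspan R {e, e0} \<subseteq> E"
    using \<open>E \<in> Fbar R\<close> \<open>e \<in> E\<close> \<open>e0 \<in> E\<close> by (intro rspan_least) (auto simp: Fbar_def)
  ultimately show ?thesis using span by blast
qed

lemma smult_set_cancel:
  fixes x :: "'a::field"
  assumes "x \<noteq> 0"
  shows "smult_set (1 / x) (smult_set x A) = A" "smult_set x (smult_set (1 / x) A) = A"
  using assms unfolding smult_set_def by (auto simp: image_image)

lemma smult_set_mono: "A \<subseteq> B \<Longrightarrow> smult_set x A \<subseteq> smult_set x B"
  unfolding smult_set_def by (rule image_mono)

lemma smult_rspan:
  fixes x :: "'a::field"
  assumes "x \<noteq> 0"
  shows "smult_set x (rspan R G) = rspan R ((*) x ` G)"
proof -
  have inj: "inj_on ((*) x) G" using assms by (auto simp: inj_on_def)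
  have sum_image: "(\<Sum>h\<in>(*) x ` G. c h * h) = x * (\<Sum>g\<in>G. c (x * g) * g)" for c
    by (simp add: sum.reindex[OF inj] sum_distrib_left mult.left_commute)
  show ?thesis
  proof
    show "smult_set x (rspan R G) \<subseteq> rspan R ((*) x ` G)"
    proof
      fix y assume "y \<in> smult_set x (rspan R G)"
      then obtain c where c: "y = x * (\<Sum>g\<in>G. c g * g)" "\<forall>g\<in>G. c g \<in> R"
        unfolding smult_set_def rspan_def by blast
      then have "y = (\<Sum>h\<in>(*) x ` G. c (h / x) * h)"
        using assms by (simp add: sum_image)
      then show "y \<in> rspan R ((*) x ` G)"
        by (rule rspanI) (use c(2) assms in auto)
    qed
    show "rspan R ((*) x ` G) \<subseteq> smult_set x (rspan R G)"
    proof
      fix y assume "y \<in> rspan R ((*) x ` G)"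
      then obtain c where c: "y = x * (\<Sum>g\<in>G. c (x * g) * g)" "\<forall>h\<in>(*) x ` G. c h \<in> R"
        unfolding rspan_def sum_image by blast
      then have "(\<Sum>g\<in>G. c (x * g) * g) \<in> rspan R G" by (intro rspanI) auto
      then show "y \<in> smult_set x (rspan R G)" unfolding smult_set_def c(1) by blast
    qed
  qed
qed

lemma fg_smult:
  fixes x :: "'a::field"
  assumes "x \<noteq> 0" "fg R F"
  shows "fg R (smult_set x F)"
proof -
  obtain G where G: "finite G" "F = rspan R G" using assms(2) unfolding fg_def by blast
  have "smult_set x F \<noteq> {0}"
  proof
    assume "smult_set x F = {0}"
    then have "F = smult_set (1 / x) {0}" using smult_set_cancel(1)[OF assms(1), of F] by simp
    then show False using assms(2) unfolding fg_def smult_set_def by simp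
  qed
  moreover have "smult_set x F = rspan R ((*) x ` G)" using smult_rspan[OF assms(1)] G(2) by simp
  ultimately show ?thesis unfolding fg_def using G(1) by (metis finite_imageI)
qed

section \<open>The finite-type operation of a semistar operation\<close>

lemma semistar_op_Fbar: "semistar_op R st \<Longrightarrow> E \<in> Fbar R \<Longrightarrow> st E \<in> Fbar R"
  unfolding semistar_op_def by simp

lemma semistar_op_smult:
  "semistar_op R st \<Longrightarrow> x \<noteq> 0 \<Longrightarrow> E \<in> Fbar R \<Longrightarrow> st (smult_set x E) = smult_set x (st E)"
  unfolding semistar_op_def by simp

lemma semistar_op_mono:
  "semistar_op R st \<Longrightarrow> E \<in> Fbar R \<Longrightarrow> F \<in> Fbar R \<Longrightarrow> E \<subseteq> F \<Longrightarrow> st E \<subseteq> st F"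
  unfolding semistar_op_def by simp

lemma semistar_op_extensive: "semistar_op R st \<Longrightarrow> E \<in> Fbar R \<Longrightarrow> E \<subseteq> st E"
  unfolding semistar_op_def by simp

lemma semistar_op_idem: "semistar_op R st \<Longrightarrow> E \<in> Fbar R \<Longrightarrow> st (st E) = st E"
  unfolding semistar_op_def by simp

lemma star_fI: "fg R F \<Longrightarrow> F \<subseteq> E \<Longrightarrow> z \<in> st F \<Longrightarrow> z \<in> star_f R st E"
  unfolding star_f_def by blast

lemma star_fE:
  assumes "z \<in> star_f R st E"
  obtains F where "fg R F" "F \<subseteq> E" "z \<in> st F"
  using assms unfolding star_f_def by blast

lemma star_f_mono: "E \<subseteq> E' \<Longrightarrow> star_f R st E \<subseteq> star_f R st E'"
  unfolding star_f_def by blast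

context
  fixes R :: "'a::field set" and st :: "'a set \<Rightarrow> 'a set"
  assumes R: "subring R" and st: "semistar_op R st"
begin

lemma star_f_subset_op:
  assumes "E \<in> Fbar R"
  shows "star_f R st E \<subseteq> st E"
proof
  fix z assume "z \<in> star_f R st E"
  then obtain F where "fg R F" "F \<subseteq> E" "z \<in> st F" by (rule star_fE)
  then show "z \<in> st E" using semistar_op_mono[OF st fg_Fbar[OF R] assms] by blast
qed

lemma subset_star_f:
  assumes "E \<in> Fbar R"
  shows "E \<subseteq> star_f R st E"
proof
  fix e assume "e \<in> E"
  then obtain F where F: "fg R F" "F \<subseteq> E" "e \<in> F" using Fbar_element_in_fg[OF R assms] by blast
  then have "e \<in> st F" using semistar_op_extensive[OF st fg_Fbar[OF R F(1)]] by blast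
  then show "e \<in> star_f R st E" by (rule star_fI[OF F(1,2)])
qed

lemma finite_subset_star_f:
  assumes E: "E \<in> Fbar R" and "finite G" "G \<subseteq> star_f R st E"
  shows "\<exists>F. fg R F \<and> F \<subseteq> E \<and> G \<subseteq> st F"
  using \<open>finite G\<close> \<open>G \<subseteq> star_f R st E\<close>
proof (induction G rule: finite_induct)
  case empty
  obtain e where "e \<in> E" using Fbar_nonzero[OF E] by blast
  then show ?case using Fbar_element_in_fg[OF R E] by blast
next
  case (insert g G)
  have "g \<in> star_f R st E" using insert.prems by simp
  then obtain F1 where F1: "fg R F1" "F1 \<subseteq> E" "g \<in> st F1" by (rule star_fE)
  obtain F2 where F2: "fg R F2" "F2 \<subseteq> E" "G \<subseteq> st F2" using insert.IH insert.prems by auto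
  define F where "F = gen_mod R (F1 \<union> F2)"
  have fgF: "fg R F" unfolding F_def by (rule fg_gen_mod_Un[OF R F1(1) F2(1)])
  have "F1 \<subseteq> F" "F2 \<subseteq> F" unfolding F_def using gen_mod_superset[OF R] by blast+
  then have "st F1 \<subseteq> st F" "st F2 \<subseteq> st F"
    using semistar_op_mono[OF st fg_Fbar[OF R F1(1)] fg_Fbar[OF R fgF]]
      semistar_op_mono[OF st fg_Fbar[OF R F2(1)] fg_Fbar[OF R fgF]] by simp_all
  moreover have "F \<subseteq> E"
    unfolding F_def using E F1(2) F2(2) by (intro gen_mod_least) (auto simp: Fbar_def)
  ultimately show ?case using fgF F1(3) F2(3) by blast
qed

lemma star_f_submod:
  assumes E: "E \<in> Fbar R"
  shows "submod R (star_f R st E)"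
  unfolding submod_def
proof (intro conjI ballI)
  have "0 \<in> E" using E unfolding Fbar_def submod_def by blast
  then show "0 \<in> star_f R st E" using subset_star_f[OF E] by blast
next
  fix x y assume "x \<in> star_f R st E" "y \<in> star_f R st E"
  then obtain F where F: "fg R F" "F \<subseteq> E" "{x, y} \<subseteq> st F"
    using finite_subset_star_f[OF E, of "{x, y}"] by auto
  have "submod R (st F)"
    using semistar_op_Fbar[OF st fg_Fbar[OF R F(1)]] unfolding Fbar_def by blast
  then have "x + y \<in> st F" using F(3) unfolding submod_def by simp
  then show "x + y \<in> star_f R st E" by (rule star_fI[OF F(1,2)])
next
  fix r x assume "r \<in> R" "x \<in> star_f R st E"
  from \<open>x \<in> star_f R st E\<close> obtain F where F: "fg R F" "F \<subseteq> E" "x \<in> st F" by (rule star_fE)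
  have "submod R (st F)"
    using semistar_op_Fbar[OF st fg_Fbar[OF R F(1)]] unfolding Fbar_def by blast
  then have "r * x \<in> st F" using F(3) \<open>r \<in> R\<close> unfolding submod_def by simp
  then show "r * x \<in> star_f R st E" by (rule star_fI[OF F(1,2)])
qed

lemma star_f_star_f_subset:
  assumes E: "E \<in> Fbar R"
  shows "star_f R st (star_f R st E) \<subseteq> star_f R st E"
proof
  fix z assume "z \<in> star_f R st (star_f R st E)"
  then obtain F where F: "fg R F" "F \<subseteq> star_f R st E" "z \<in> st F" by (rule star_fE)
  obtain G where G: "finite G" "F = rspan R G" using F(1) unfolding fg_def by blast
  have "G \<subseteq> star_f R st E" using rspan_superset[OF R G(1)] G(2) F(2) by blast
  then obtain F' where F': "fg R F'" "F' \<subseteq> E" "G \<subseteq> st F'"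
    using finite_subset_star_f[OF E G(1)] by blast
  have stF': "st F' \<in> Fbar R" by (rule semistar_op_Fbar[OF st fg_Fbar[OF R F'(1)]])
  then have "F \<subseteq> st F'" using rspan_least G F'(3) unfolding Fbar_def by blast
  then have "st F \<subseteq> st (st F')" by (rule semistar_op_mono[OF st fg_Fbar[OF R F(1)] stF'])
  then have "z \<in> st F'" using F(3) semistar_op_idem[OF st fg_Fbar[OF R F'(1)]] by blast
  then show "z \<in> star_f R st E" using F'(1,2) by (rule star_fI[rotated 2])
qed

lemma smult_star_f_subset:
  assumes "x \<noteq> 0"
  shows "smult_set x (star_f R st E) \<subseteq> star_f R st (smult_set x E)"
proof
  fix z assume "z \<in> smult_set x (star_f R st E)"
  then obtain w where "z = x * w" "w \<in> star_f R st E" unfolding smult_set_def by blast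
  from \<open>w \<in> star_f R st E\<close> obtain F where F: "fg R F" "F \<subseteq> E" "w \<in> st F" by (rule star_fE)
  have "z \<in> smult_set x (st F)" using \<open>z = x * w\<close> F(3) unfolding smult_set_def by blast
  also have "\<dots> = st (smult_set x F)"
    using semistar_op_smult[OF st assms fg_Fbar[OF R F(1)]] by simp
  finally show "z \<in> star_f R st (smult_set x E)"
    by (rule star_fI[OF fg_smult[OF assms F(1)] smult_set_mono[OF F(2)]])
qed

lemma star_f_smult:
  assumes "x \<noteq> 0"
  shows "star_f R st (smult_set x E) = smult_set x (star_f R st E)"
proof
  have "smult_set (1 / x) (star_f R st (smult_set x E)) \<subseteq> star_f R st E"
    using smult_star_f_subset[of "1 / x" "smult_set x E"] assms by (simp add: smult_set_cancel)
  then show "star_f R st (smult_set x E) \<subseteq> smult_set x (star_f R st E)"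
    using smult_set_mono smult_set_cancel(2)[OF assms] by metis
  show "smult_set x (star_f R st E) \<subseteq> star_f R st (smult_set x E)"
    by (rule smult_star_f_subset[OF assms])
qed

end

section \<open>The operations \<open>v\<close> and \<open>t\<close>\<close>

lemma colon_antimono: "B \<subseteq> B' \<Longrightarrow> colon A B' \<subseteq> colon A B"
  unfolding colon_def by blast

lemma colon_ring:
  assumes R: "subring R"
  shows "colon R R = R"
proof
  show "colon R R \<subseteq> R"
    using subringD(2)[OF R] unfolding colon_def by (auto dest: bspec[of _ _ 1])
  show "R \<subseteq> colon R R"
    using subringD(5)[OF R] unfolding colon_def by blast
qed

lemma colon_rspan:
  assumes R: "subring R" and "finite G"
  shows "colon R G \<subseteq> colon R (rspan R G)"
proof
  fix y assume y: "y \<in> colon R G"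
  have "submod R {h. y * h \<in> R}"
    unfolding submod_def
  proof (intro conjI ballI)
    fix r h assume "r \<in> R" "h \<in> {h. y * h \<in> R}"
    then have "r * (y * h) \<in> R" using subringD(5)[OF R] by simp
    then show "r * h \<in> {h. y * h \<in> R}" by (simp add: mult.left_commute)
  qed (auto simp: distrib_left subringD[OF R])
  then have "rspan R G \<subseteq> {h. y * h \<in> R}"
    using rspan_least \<open>finite G\<close> y unfolding colon_def by blast
  then show "y \<in> colon R (rspan R G)" unfolding colon_def by blast
qed

lemma v_op_mono: "E \<subseteq> E' \<Longrightarrow> v_op R E \<subseteq> v_op R E'"
  unfolding v_op_def by (intro colon_antimono)

lemma v_op_ring: "subring R \<Longrightarrow> v_op R R = R"
  unfolding v_op_def by (simp add: colon_ring)

lemma one_in_v_op_iff: "1 \<in> v_op R H \<longleftrightarrow> colon R H \<subseteq> R"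
  unfolding v_op_def colon_def by auto

lemma t_op_subset_v_op: "t_op R E \<subseteq> v_op R E"
  unfolding t_op_def star_f_def using v_op_mono by blast

lemma fg_ring:
  assumes R: "subring R"
  shows "fg R R"
proof -
  have "R \<subseteq> rspan R {1}"
  proof
    fix r assume "r \<in> R"
    then show "r \<in> rspan R {1}" by (intro rspanI[where c = "\<lambda>_. r"]) simp_all
  qed
  moreover have "rspan R {1} \<subseteq> R" using rspan_least[OF submod_ring[OF R]] subringD(2)[OF R] by simp
  ultimately show ?thesis
    unfolding fg_def using subringD(2)[OF R] by (intro conjI exI[of _ "{1}"]) auto
qed

lemma t_op_eq_ring:
  assumes R: "subring R" and "fg R H" "H \<subseteq> R" "colon R H \<subseteq> R"
  shows "t_op R H = R"
proof
  have "t_op R H \<subseteq> v_op R R" using t_op_subset_v_op v_op_mono[OF \<open>H \<subseteq> R\<close>] by blast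
  then show "t_op R H \<subseteq> R" using v_op_ring[OF R] by simp
  have "R \<subseteq> v_op R H"
    using \<open>colon R H \<subseteq> R\<close> subringD(5)[OF R] unfolding v_op_def colon_def by blast
  also have "\<dots> \<subseteq> t_op R H" unfolding t_op_def using \<open>fg R H\<close> by (blast intro: star_fI)
  finally show "R \<subseteq> t_op R H" .
qed

lemma t_op_ring: "subring R \<Longrightarrow> t_op R R = R"
  by (rule t_op_eq_ring) (simp_all add: fg_ring colon_ring)

section \<open>Directed families of overrings\<close>

locale directed_overring_family =
  fixes D :: "'a::field set" and \<Lambda> :: "'i set" and Tf :: "'i \<Rightarrow> 'a set"
  assumes subring_D: "subring D"
    and index_nonempty: "\<Lambda> \<noteq> {}"
    and overring_Tf: "i \<in> \<Lambda> \<Longrightarrow> overring D (Tf i)"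
    and directed: "a \<in> \<Lambda> \<Longrightarrow> b \<in> \<Lambda> \<Longrightarrow> \<exists>c\<in>\<Lambda>. Tf a \<subseteq> Tf c \<and> Tf b \<subseteq> Tf c"
begin

abbreviation T :: "'a set" where "T \<equiv> \<Union>i\<in>\<Lambda>. Tf i"

lemma subring_Tf: "i \<in> \<Lambda> \<Longrightarrow> subring (Tf i)"
  using overring_Tf unfolding overring_def by blast

lemma D_subset_Tf: "i \<in> \<Lambda> \<Longrightarrow> D \<subseteq> Tf i"
  using overring_Tf unfolding overring_def by blast

lemma D_subset_T: "D \<subseteq> T"
  using index_nonempty D_subset_Tf by blast

lemma finite_subset_directed_Union:
  assumes mono: "\<And>a c. a \<in> \<Lambda> \<Longrightarrow> c \<in> \<Lambda> \<Longrightarrow> Tf a \<subseteq> Tf c \<Longrightarrow> A a \<subseteq> A c"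
    and "i \<in> \<Lambda>" "finite G" "G \<subseteq> (\<Union>a\<in>\<Lambda>. A a)"
  shows "\<exists>c\<in>\<Lambda>. Tf i \<subseteq> Tf c \<and> G \<subseteq> A c"
  using \<open>finite G\<close> \<open>G \<subseteq> (\<Union>a\<in>\<Lambda>. A a)\<close>
proof (induction G rule: finite_induct)
  case empty
  then show ?case using \<open>i \<in> \<Lambda>\<close> by blast
next
  case (insert g G)
  then obtain b where b: "b \<in> \<Lambda>" "Tf i \<subseteq> Tf b" "G \<subseteq> A b" by auto
  obtain a where a: "a \<in> \<Lambda>" "g \<in> A a" using insert.prems by auto
  obtain c where c: "c \<in> \<Lambda>" "Tf a \<subseteq> Tf c" "Tf b \<subseteq> Tf c" using directed[OF a(1) b(1)] by blast
  have "A a \<subseteq> A c" "A b \<subseteq> A c" using mono a(1) b(1) c by simp_all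
  then show ?case using a b c by blast
qed

lemma finite_subset_T:
  "i \<in> \<Lambda> \<Longrightarrow> finite G \<Longrightarrow> G \<subseteq> T \<Longrightarrow> \<exists>c\<in>\<Lambda>. Tf i \<subseteq> Tf c \<and> G \<subseteq> Tf c"
  by (rule finite_subset_directed_Union)

lemma subring_T: "subring T"
  unfolding subring_def
proof (intro conjI ballI)
  obtain i where "i \<in> \<Lambda>" using index_nonempty by blast
  then show "0 \<in> T" "1 \<in> T" using subringD(1,2)[OF subring_Tf] by blast+
next
  fix x y assume "x \<in> T" "y \<in> T"
  then obtain i where "i \<in> \<Lambda>" by blast
  then obtain c where "c \<in> \<Lambda>" "{x, y} \<subseteq> Tf c"
    using finite_subset_T[of i "{x, y}"] \<open>x \<in> T\<close> \<open>y \<in> T\<close> by auto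
  then have "x + y \<in> Tf c" "x - y \<in> Tf c" "x * y \<in> Tf c"
    using subringD(3-5)[OF subring_Tf[OF \<open>c \<in> \<Lambda>\<close>]] by auto
  then show "x + y \<in> T" "x - y \<in> T" "x * y \<in> T" using \<open>c \<in> \<Lambda>\<close> by blast+
qed

lemma fg_subset_T:
  assumes "i \<in> \<Lambda>" "fg (Tf i) H" "H \<subseteq> T"
  shows "\<exists>c\<in>\<Lambda>. Tf i \<subseteq> Tf c \<and> H \<subseteq> Tf c"
proof -
  obtain G where G: "finite G" "H = rspan (Tf i) G" using assms(2) unfolding fg_def by blast
  have "G \<subseteq> T" using rspan_superset[OF subring_Tf[OF assms(1)] G(1)] G(2) assms(3) by blast
  then obtain c where c: "c \<in> \<Lambda>" "Tf i \<subseteq> Tf c" "G \<subseteq> Tf c"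
    using finite_subset_T[OF assms(1) G(1)] by blast
  have "submod (Tf i) (Tf c)" by (rule submod_subring_mono[OF submod_ring[OF subring_Tf[OF c(1)]] c(2)])
  then have "H \<subseteq> Tf c" unfolding G(2) by (rule rspan_least[OF _ G(1) c(3)])
  then show ?thesis using c by blast
qed

lemma linked_t_op_T:
  assumes linked: "\<forall>i\<in>\<Lambda>. linked D st (Tf i) (t_op (Tf i))"
  shows "linked D st T (t_op T)"
  unfolding linked_def
proof (intro allI impI)
  fix F assume F: "fg D F \<and> F \<subseteq> D \<and> st F = st D"
  obtain G where G: "finite G" "F = rspan D G" using F unfolding fg_def by blast
  have GF: "G \<subseteq> F" using rspan_superset[OF subring_D G(1)] G(2) by simp
  have FT: "gen_mod T F \<subseteq> T"
    using F D_subset_T by (intro gen_mod_least[OF submod_ring[OF subring_T]]) auto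
  have fgFT: "fg T (gen_mod T F)"
    using F by (intro fg_extend_scalars[OF subring_D subring_T D_subset_T]) simp
  have colon_Tf: "colon (Tf c) (rspan (Tf c) G) \<subseteq> Tf c" if "c \<in> \<Lambda>" for c
  proof -
    have "F \<subseteq> rspan (Tf c) G" using G(2) rspan_ring_mono[OF D_subset_Tf[OF that]] by simp
    then have "gen_mod (Tf c) F = rspan (Tf c) G"
      using gen_mod_eq_rspan[OF subring_Tf[OF that] G(1) GF] by simp
    moreover have "t_op (Tf c) (gen_mod (Tf c) F) = t_op (Tf c) (Tf c)"
      using linked that F unfolding linked_def by simp
    ultimately have "t_op (Tf c) (rspan (Tf c) G) = Tf c"
      using t_op_ring[OF subring_Tf[OF that]] by simp
    then have "1 \<in> v_op (Tf c) (rspan (Tf c) G)"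
      using t_op_subset_v_op subringD(2)[OF subring_Tf[OF that]] by blast
    then show ?thesis unfolding one_in_v_op_iff .
  qed
  have "colon T (gen_mod T F) \<subseteq> T"
  proof
    fix y assume "y \<in> colon T (gen_mod T F)"
    then have "(*) y ` G \<subseteq> T" using GF gen_mod_superset[OF subring_T, of F] unfolding colon_def by blast
    moreover obtain i where "i \<in> \<Lambda>" using index_nonempty by blast
    ultimately obtain c where c: "c \<in> \<Lambda>" "(*) y ` G \<subseteq> Tf c"
      using finite_subset_T[OF \<open>i \<in> \<Lambda>\<close> finite_imageI[OF G(1)]] by blast
    then have "y \<in> colon (Tf c) G" unfolding colon_def by blast
    then have "y \<in> colon (Tf c) (rspan (Tf c) G)" using colon_rspan[OF subring_Tf[OF c(1)] G(1)] by blast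
    then show "y \<in> T" using colon_Tf[OF c(1)] c(1) by blast
  qed
  then show "t_op T (gen_mod T F) = t_op T T"
    using t_op_eq_ring[OF subring_T fgFT FT] t_op_ring[OF subring_T] by simp
qed

end

locale semistar_direct_family = directed_overring_family D \<Lambda> Tf
  for D :: "'a::field set" and \<Lambda> :: "'i set" and Tf :: "'i \<Rightarrow> 'a set" +
  fixes ops :: "'i \<Rightarrow> 'a set \<Rightarrow> 'a set"
  assumes semistar_ops: "i \<in> \<Lambda> \<Longrightarrow> semistar_op (Tf i) (ops i)"
    and compatible: "a \<in> \<Lambda> \<Longrightarrow> c \<in> \<Lambda> \<Longrightarrow> Tf a \<subseteq> Tf c \<Longrightarrow> fg (Tf a) H \<Longrightarrow>
      ops a H \<subseteq> ops c (gen_mod (Tf c) H)"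
begin

abbreviation ops_f :: "'i \<Rightarrow> 'a set \<Rightarrow> 'a set" where
  "ops_f i \<equiv> star_f (Tf i) (ops i)"

abbreviation star_Lambda :: "'a set \<Rightarrow> 'a set" where
  "star_Lambda E \<equiv> \<Union>i\<in>\<Lambda>. ops_f i E"

lemma Fbar_T_imp_Fbar_Tf: "E \<in> Fbar T \<Longrightarrow> i \<in> \<Lambda> \<Longrightarrow> E \<in> Fbar (Tf i)"
  unfolding Fbar_def using submod_subring_mono[of T E "Tf i"] by blast

lemma ops_f_index_mono:
  assumes "a \<in> \<Lambda>" "c \<in> \<Lambda>" "Tf a \<subseteq> Tf c" "submod (Tf c) E"
  shows "ops_f a E \<subseteq> ops_f c E"
proof
  fix z assume "z \<in> ops_f a E"
  then obtain H where H: "fg (Tf a) H" "H \<subseteq> E" "z \<in> ops a H" by (rule star_fE)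
  have "fg (Tf c) (gen_mod (Tf c) H)"
    by (rule fg_extend_scalars[OF subring_Tf[OF assms(1)] subring_Tf[OF assms(2)] assms(3) H(1)])
  moreover have "gen_mod (Tf c) H \<subseteq> E" by (rule gen_mod_least[OF assms(4) H(2)])
  moreover have "z \<in> ops c (gen_mod (Tf c) H)" using compatible[OF assms(1-3) H(1)] H(3) by blast
  ultimately show "z \<in> ops_f c E" by (rule star_fI)
qed

lemma finite_subset_star_Lambda:
  assumes "E \<in> Fbar T" "i \<in> \<Lambda>" "finite G" "G \<subseteq> star_Lambda E"
  shows "\<exists>c\<in>\<Lambda>. Tf i \<subseteq> Tf c \<and> G \<subseteq> ops_f c E"
proof (rule finite_subset_directed_Union[OF _ assms(2-4)])
  fix a c assume "a \<in> \<Lambda>" "c \<in> \<Lambda>" "Tf a \<subseteq> Tf c"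
  moreover have "submod (Tf c) E"
    using Fbar_T_imp_Fbar_Tf[OF assms(1) \<open>c \<in> \<Lambda>\<close>] unfolding Fbar_def by simp
  ultimately show "ops_f a E \<subseteq> ops_f c E" by (rule ops_f_index_mono)
qed

lemma submod_ops_f:
  "E \<in> Fbar T \<Longrightarrow> i \<in> \<Lambda> \<Longrightarrow> submod (Tf i) (ops_f i E)"
  using star_f_submod[OF subring_Tf semistar_ops Fbar_T_imp_Fbar_Tf] by blast

lemma subset_star_Lambda:
  assumes "E \<in> Fbar T"
  shows "E \<subseteq> star_Lambda E"
proof -
  obtain i where i: "i \<in> \<Lambda>" using index_nonempty by blast
  then have "E \<subseteq> ops_f i E"
    using subset_star_f[OF subring_Tf semistar_ops Fbar_T_imp_Fbar_Tf[OF assms]] by blast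
  then show ?thesis using i by blast
qed

lemma star_Lambda_submod:
  assumes E: "E \<in> Fbar T"
  shows "submod T (star_Lambda E)"
  unfolding submod_def
proof (intro conjI ballI)
  have "0 \<in> E" using E unfolding Fbar_def submod_def by blast
  then show "0 \<in> star_Lambda E" using subset_star_Lambda[OF E] by blast
next
  fix x y assume "x \<in> star_Lambda E" "y \<in> star_Lambda E"
  moreover obtain i where "i \<in> \<Lambda>" using index_nonempty by blast
  ultimately obtain c where "c \<in> \<Lambda>" "{x, y} \<subseteq> ops_f c E"
    using finite_subset_star_Lambda[OF E, of i "{x, y}"] by auto
  then have "x + y \<in> ops_f c E" using submod_ops_f[OF E] unfolding submod_def by simp
  then show "x + y \<in> star_Lambda E" using \<open>c \<in> \<Lambda>\<close> by blast
next
  fix r x assume "r \<in> T" "x \<in> star_Lambda E"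
  then obtain a where "a \<in> \<Lambda>" "r \<in> Tf a" by blast
  then obtain c where c: "c \<in> \<Lambda>" "Tf a \<subseteq> Tf c" "{x} \<subseteq> ops_f c E"
    using finite_subset_star_Lambda[OF E, of a "{x}"] \<open>x \<in> star_Lambda E\<close> by auto
  then have "r * x \<in> ops_f c E"
    using submod_ops_f[OF E] \<open>r \<in> Tf a\<close> unfolding submod_def by auto
  then show "r * x \<in> star_Lambda E" using \<open>c \<in> \<Lambda>\<close> by blast
qed

lemma star_Lambda_Fbar:
  assumes "E \<in> Fbar T"
  shows "star_Lambda E \<in> Fbar T"
proof -
  have "E \<noteq> {0}" "0 \<in> E" using assms unfolding Fbar_def submod_def by auto
  then have "star_Lambda E \<noteq> {0}" using subset_star_Lambda[OF assms] by blast
  then show ?thesis unfolding Fbar_def using star_Lambda_submod[OF assms] by blast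
qed

lemma star_Lambda_mono: "E \<subseteq> F \<Longrightarrow> star_Lambda E \<subseteq> star_Lambda F"
  by (intro UN_mono star_f_mono) auto

lemma star_Lambda_smult:
  assumes "x \<noteq> 0"
  shows "star_Lambda (smult_set x E) = smult_set x (star_Lambda E)"
proof -
  have "star_Lambda (smult_set x E) = (\<Union>i\<in>\<Lambda>. smult_set x (ops_f i E))"
    using star_f_smult[OF subring_Tf semistar_ops assms] by simp
  then show ?thesis by (simp add: smult_set_def image_UN)
qed

lemma star_Lambda_star_Lambda_subset:
  assumes E: "E \<in> Fbar T"
  shows "star_Lambda (star_Lambda E) \<subseteq> star_Lambda E"
proof
  fix z assume "z \<in> star_Lambda (star_Lambda E)"
  then obtain i where i: "i \<in> \<Lambda>" "z \<in> ops_f i (star_Lambda E)" by blast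
  from i(2) obtain H where H: "fg (Tf i) H" "H \<subseteq> star_Lambda E" "z \<in> ops i H" by (rule star_fE)
  obtain G where G: "finite G" "H = rspan (Tf i) G" using H(1) unfolding fg_def by blast
  have "G \<subseteq> star_Lambda E" using rspan_superset[OF subring_Tf[OF i(1)] G(1)] G(2) H(2) by blast
  then obtain c where c: "c \<in> \<Lambda>" "Tf i \<subseteq> Tf c" "G \<subseteq> ops_f c E"
    using finite_subset_star_Lambda[OF E i(1) G(1)] by blast
  have sub_c: "submod (Tf c) (ops_f c E)" by (rule submod_ops_f[OF E c(1)])
  have "H \<subseteq> ops_f c E"
    unfolding G(2) by (rule rspan_least[OF submod_subring_mono[OF sub_c c(2)] G(1) c(3)])
  then have "z \<in> ops_f i (ops_f c E)" by (rule star_fI[where st = "ops i", OF H(1) _ H(3)])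
  also have "\<dots> \<subseteq> ops_f c (ops_f c E)" by (rule ops_f_index_mono[OF i(1) c(1,2) sub_c])
  also have "\<dots> \<subseteq> ops_f c E"
    by (rule star_f_star_f_subset[OF subring_Tf[OF c(1)] semistar_ops[OF c(1)] Fbar_T_imp_Fbar_Tf[OF E c(1)]])
  finally show "z \<in> star_Lambda E" using c(1) by blast
qed

lemma semistar_star_Lambda: "semistar_op T star_Lambda"
  unfolding semistar_op_def
proof (intro conjI ballI allI impI)
  fix E assume E: "E \<in> Fbar T"
  then show "star_Lambda E \<in> Fbar T" "E \<subseteq> star_Lambda E"
    by (rule star_Lambda_Fbar, rule subset_star_Lambda)
  show "star_Lambda (star_Lambda E) = star_Lambda E"
    using star_Lambda_star_Lambda_subset[OF E] subset_star_Lambda[OF star_Lambda_Fbar[OF E]]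
    by (rule subset_antisym)
next
  fix x :: 'a and E assume "x \<noteq> 0"
  then show "star_Lambda (smult_set x E) = smult_set x (star_Lambda E)" by (rule star_Lambda_smult)
next
  fix E F :: "'a set" assume "E \<subseteq> F"
  then show "star_Lambda E \<subseteq> star_Lambda F" by (rule star_Lambda_mono)
qed

lemma finite_type_star_Lambda: "finite_type T star_Lambda"
  unfolding finite_type_def
proof
  fix E assume E: "E \<in> Fbar T"
  show "star_Lambda E = star_f T star_Lambda E"
  proof
    show "star_f T star_Lambda E \<subseteq> star_Lambda E"
    proof
      fix z assume "z \<in> star_f T star_Lambda E"
      then obtain F where "fg T F" "F \<subseteq> E" "z \<in> star_Lambda F" by (rule star_fE)
      then show "z \<in> star_Lambda E" using star_Lambda_mono[OF \<open>F \<subseteq> E\<close>] by blast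
    qed
  next
    show "star_Lambda E \<subseteq> star_f T star_Lambda E"
    proof
      fix z assume "z \<in> star_Lambda E"
      then obtain i where i: "i \<in> \<Lambda>" "z \<in> ops_f i E" by blast
      from i(2) obtain F where F: "fg (Tf i) F" "F \<subseteq> E" "z \<in> ops i F" by (rule star_fE)
      have "Tf i \<subseteq> T" using i(1) by blast
      have fgF: "fg T (gen_mod T F)"
        by (rule fg_extend_scalars[OF subring_Tf[OF i(1)] subring_T \<open>Tf i \<subseteq> T\<close> F(1)])
      have FE: "gen_mod T F \<subseteq> E" using E F(2) unfolding Fbar_def by (intro gen_mod_least) auto
      have "z \<in> ops_f i (gen_mod T F)"
        using gen_mod_superset[OF subring_T, of F] by (rule star_fI[where st = "ops i", OF F(1) _ F(3)])
      then have "z \<in> star_Lambda (gen_mod T F)" using i(1) by blast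
      then show "z \<in> star_f T star_Lambda E" by (rule star_fI[where st = star_Lambda, OF fgF FE])
    qed
  qed
qed

lemma linked_star_Lambda:
  assumes linked: "\<forall>i\<in>\<Lambda>. linked D st (Tf i) (ops i)"
  shows "linked D st T star_Lambda"
  unfolding linked_def
proof (intro allI impI)
  fix F assume F: "fg D F \<and> F \<subseteq> D \<and> st F = st D"
  have "gen_mod T F \<subseteq> T"
    using F D_subset_T by (intro gen_mod_least[OF submod_ring[OF subring_T]]) auto
  then have "star_Lambda (gen_mod T F) \<subseteq> star_Lambda T" by (rule star_Lambda_mono)
  moreover have "star_Lambda T \<subseteq> star_Lambda (gen_mod T F)"
  proof
    fix z assume "z \<in> star_Lambda T"
    then obtain i where i: "i \<in> \<Lambda>" "z \<in> ops_f i T" by blast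
    from i(2) obtain H where H: "fg (Tf i) H" "H \<subseteq> T" "z \<in> ops i H" by (rule star_fE)
    obtain c where c: "c \<in> \<Lambda>" "Tf i \<subseteq> Tf c" "H \<subseteq> Tf c"
      using fg_subset_T[OF i(1) H(1,2)] by blast
    have Tc: "Tf c \<in> Fbar (Tf c)" by (rule Fbar_ring[OF subring_Tf[OF c(1)]])
    have "z \<in> ops_f i (Tf c)" by (rule star_fI[where st = "ops i", OF H(1) c(3) H(3)])
    also have "\<dots> \<subseteq> ops_f c (Tf c)"
      using Tc unfolding Fbar_def by (intro ops_f_index_mono[OF i(1) c(1,2)]) simp
    also have "\<dots> \<subseteq> ops c (Tf c)"
      by (rule star_f_subset_op[OF subring_Tf[OF c(1)] semistar_ops[OF c(1)] Tc])
    also have "\<dots> = ops c (gen_mod (Tf c) F)" using linked c(1) F unfolding linked_def by simp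
    also have "\<dots> \<subseteq> ops_f c (gen_mod T F)"
    proof -
      have "fg (Tf c) (gen_mod (Tf c) F)"
        using F by (intro fg_extend_scalars[OF subring_D subring_Tf[OF c(1)] D_subset_Tf[OF c(1)]]) simp
      moreover have "gen_mod (Tf c) F \<subseteq> gen_mod T F" using c(1) by (intro gen_mod_ring_mono) blast
      ultimately show ?thesis using star_fI[where st = "ops c"] by blast
    qed
    finally show "z \<in> star_Lambda (gen_mod T F)" using c(1) by blast
  qed
  ultimately show "star_Lambda (gen_mod T F) = star_Lambda T" by (rule subset_antisym)
qed

end

lemma direct_family_imp_semistar_direct_family:
  assumes "domain_with_qf D" "direct_family D \<Lambda> Tf ops"
  shows "semistar_direct_family D \<Lambda> Tf ops"
proof (unfold_locales)
  show "subring D" using assms(1) unfolding domain_with_qf_def by simp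
qed (use assms(2) in \<open>simp_all add: direct_family_def\<close>)

theorem lemma3p5:
  fixes D :: "'a::field set" and st :: "'a set \<Rightarrow> 'a set"
    and \<Lambda> :: "'i set" and Tf :: "'i \<Rightarrow> 'a set" and ops :: "'i \<Rightarrow> 'a set \<Rightarrow> 'a set"
  assumes "domain_with_qf D"
    and "semistar_op D st"
    and "direct_family D \<Lambda> Tf ops"
  defines "T \<equiv> \<Union>i\<in>\<Lambda>. Tf i"
    and "starL \<equiv> (\<lambda>E. \<Union>i\<in>\<Lambda>. star_f (Tf i) (ops i) E)"
  shows "(semistar_op T starL \<and> finite_type T starL) \<and>
         ((\<forall>i\<in>\<Lambda>. linked D st (Tf i) (ops i)) \<longrightarrow> linked D st T starL) \<and>
         ((\<forall>i\<in>\<Lambda>. linked D st (Tf i) (t_op (Tf i))) \<longrightarrow> linked D st T (t_op T))"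
proof -
  interpret semistar_direct_family D \<Lambda> Tf ops
    by (rule direct_family_imp_semistar_direct_family[OF assms(1,3)])
  \<comment> \<open>\<open>st\<close> need not be a semistar operation: linkedness only compares \<open>st F\<close> with \<open>st D\<close>.\<close>
  show ?thesis
    unfolding T_def starL_def
    by (simp add: semistar_star_Lambda finite_type_star_Lambda linked_star_Lambda linked_t_op_T)
qed

end
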